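(* Let $(L,\preceq,\bot,\top)$ be a bounded lattice with at least three elements and let $K$ be a block of $L$. If $(L\setminus K)\not\subseteq\{\bot,\top\}$, then $P=(L\setminus K)\cup\{\bot,\top\}$ is a complete block of $L$. Moreover, $L$ can be decomposed into the independent blocks $K$ and $P$, i.e. $K$ and $P$ are independent and $K\cup P=L$.
   Context: For $k\in L$ let ${\uparrow}k=\{x\in L\mid k\preceq x\}$ and ${\downarrow}k=\{x\in L\mid x\preceq k\}$. A block of $L$ is a sublattice $K\subsetneq L$ (a proper subset) such that $K\setminus\{\bot,\top\}\neq\varnothing$ and $({\uparrow}k\cup{\downarrow}k)\setminus\{\bot,\top\}\subseteq K$ for every $k\in K\setminus\{\bot,\top\}$. A block is complete if it contains $\bot$ and $\top$. Two blocks $K_1,K_2$ are independent if $K_1\cap K_2\subseteq\{\bot,\top\}$. *)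

theory Defs
  imports Main
begin

text \<open>The bounded lattice L is the whole carrier of a type of class bounded_lattice,
  ordered by (\<le>), with bot and top.\<close>

definition sublattice :: "'a::bounded_lattice set \<Rightarrow> bool" where
  "sublattice K \<longleftrightarrow> (\<forall>x\<in>K. \<forall>y\<in>K. inf x y \<in> K \<and> sup x y \<in> K)"

definition up_set :: "'a::bounded_lattice \<Rightarrow> 'a set" where
  "up_set k = {x. k \<le> x}"

definition down_set :: "'a::bounded_lattice \<Rightarrow> 'a set" where
  "down_set k = {x. x \<le> k}"

definition block :: "'a::bounded_lattice set \<Rightarrow> bool" where
  "block K \<longleftrightarrow> sublattice K \<and> K \<subset> UNIV \<and> K - {bot, top} \<noteq> {} \<and>
     (\<forall>k \<in> K - {bot, top}. (up_set k \<union> down_set k) - {bot, top} \<subseteq> K)"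

definition complete_block :: "'a::bounded_lattice set \<Rightarrow> bool" where
  "complete_block K \<longleftrightarrow> block K \<and> bot \<in> K \<and> top \<in> K"

definition independent_blocks :: "'a::bounded_lattice set \<Rightarrow> 'a set \<Rightarrow> bool" where
  "independent_blocks K1 K2 \<longleftrightarrow> K1 \<inter> K2 \<subseteq> {bot, top}"

end

theory Submission
  imports Defs
begin

text \<open>Two comparable elements other than \<open>bot\<close> and \<open>top\<close> lie either both in a block \<open>K\<close> or both
  outside it. Hence the complement of \<open>K\<close>, with the bounds added back, inherits the closure
  property, and it is a sublattice because the meet (join) of two of its inner elements is below
  (above) each of them and so cannot be an inner element of \<open>K\<close>.\<close>

lemma block_comparable_mem:
  assumes "block K" and "k \<in> K" and "k \<notin> {bot, top}"
    and "k \<le> x \<or> x \<le> k" and "x \<notin> {bot, top}"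
  shows "x \<in> K"
  using assms unfolding block_def up_set_def down_set_def by blast

lemma sublattice_block_complement:
  assumes "block K"
  shows "sublattice ((UNIV - K) \<union> {bot, top})"
  unfolding sublattice_def
proof (intro ballI conjI)
  fix x y assume x: "x \<in> (UNIV - K) \<union> {bot, top}" and y: "y \<in> (UNIV - K) \<union> {bot, top}"
  show "inf x y \<in> (UNIV - K) \<union> {bot, top}"
  proof (cases "x \<in> {bot, top} \<or> y \<in> {bot, top}")
    case True
    then show ?thesis using x y by (auto simp: inf.absorb1 inf.absorb2)
  next
    case False
    then have "x \<notin> K" using x by auto
    then show ?thesis
      using block_comparable_mem[OF assms, of "inf x y" x] False by auto
  qed
  show "sup x y \<in> (UNIV - K) \<union> {bot, top}"
  proof (cases "x \<in> {bot, top} \<or> y \<in> {bot, top}")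
    case True
    then show ?thesis using x y by (auto simp: sup.absorb1 sup.absorb2)
  next
    case False
    then have "x \<notin> K" using x by auto
    then show ?thesis
      using block_comparable_mem[OF assms, of "sup x y" x] False by auto
  qed
qed

lemma complete_block_complement:
  assumes K: "block K" and nontrivial: "\<not> (UNIV - K \<subseteq> {bot, top})"
  shows "complete_block ((UNIV - K) \<union> {bot, top})"
  unfolding complete_block_def block_def
proof (intro conjI)
  show "sublattice ((UNIV - K) \<union> {bot, top})"
    using K by (rule sublattice_block_complement)
  show "(UNIV - K) \<union> {bot, top} \<subset> UNIV"
    using K unfolding block_def by auto
  show "(UNIV - K) \<union> {bot, top} - {bot, top} \<noteq> {}"
    using nontrivial by auto
  show "\<forall>p\<in>(UNIV - K) \<union> {bot, top} - {bot, top}.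
          (up_set p \<union> down_set p) - {bot, top} \<subseteq> (UNIV - K) \<union> {bot, top}"
    unfolding up_set_def down_set_def using block_comparable_mem[OF K] by blast
  show "bot \<in> (UNIV - K) \<union> {bot, top}" and "top \<in> (UNIV - K) \<union> {bot, top}"
    by simp_all
qed

theorem proposition21:
  fixes K :: "'a::bounded_lattice set"
  assumes three: "\<exists>a b c :: 'a. a \<noteq> b \<and> a \<noteq> c \<and> b \<noteq> c"
    and blk: "block K"
    and notsub: "\<not> (UNIV - K \<subseteq> {bot, top})"
  shows "complete_block ((UNIV - K) \<union> {bot, top})
         \<and> independent_blocks K ((UNIV - K) \<union> {bot, top})
         \<and> K \<union> ((UNIV - K) \<union> {bot, top}) = UNIV"
  using complete_block_complement[OF blk notsub]
  unfolding independent_blocks_def by auto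

end
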